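(* Let $\Gamma\subseteq\mathbb N\times\mathbb N^d$ be a graded semigroup satisfying (i) linear growth and (ii) bigness. For each $k\ge1$ let $\Gamma^k\subseteq\mathbb N\times\mathbb N^d$ be a graded subsemigroup with $\Gamma^k_1=\Gamma_k$ and $\Gamma^k_r\subseteq\Gamma_{kr}$ for all $r\ge1$. Then $$k^{-d}\,\mathrm{vol}\big(\Delta(\Gamma^k)\big)\xrightarrow[k\to\infty]{}\mathrm{vol}\big(\Delta(\Gamma)\big),$$ where $\mathrm{vol}$ denotes Lebesgue measure on $\mathbb R^d$.
   Context: For a graded semigroup $\Gamma\subseteq\mathbb N\times\mathbb N^d$ (a subsemigroup containing $(0,0)$), $\Gamma_m=\{\alpha\in\mathbb N^d:(m,\alpha)\in\Gamma\}$. Linear growth: $\Gamma$ is contained in a finitely generated submonoid of $\mathbb N\times\mathbb N^d$ generated by elements of the form $(1,\beta)$. Bigness: $\Gamma$ generates $\mathbb Z^{d+1}$ as a group. The Okounkov body is $\Delta(\Gamma)=\{x\in\mathbb R^d:(1,x)\in\overline{\mathrm{Cone}}(\Gamma)\}$, where $\overline{\mathrm{Cone}}(\Gamma)$ is the closed convex cone in $\mathbb R^{d+1}$ generated by $\Gamma$; for $\Gamma$ satisfying (i)–(ii) it is a convex body (compact, convex, with nonempty interior). *)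

theory Defs
  imports "HOL-Analysis.Analysis"
begin

text \<open>Elements of N x N^d are pairs (m, alpha) with alpha :: nat^'n; d = CARD('n).\<close>

definition gadd :: "nat \<times> (nat^'n) \<Rightarrow> nat \<times> (nat^'n) \<Rightarrow> nat \<times> (nat^'n)" where
  "gadd p q = (fst p + fst q, snd p + snd q)"

definition graded_semigroup :: "(nat \<times> (nat^'n)) set \<Rightarrow> bool" where
  "graded_semigroup G \<longleftrightarrow> (0, 0) \<in> G \<and> (\<forall>p\<in>G. \<forall>q\<in>G. gadd p q \<in> G)"

definition slice :: "(nat \<times> (nat^'n)) set \<Rightarrow> nat \<Rightarrow> (nat^'n) set" where
  "slice G m = {\<alpha>. (m, \<alpha>) \<in> G}"

inductive_set monoid_gen :: "(nat \<times> (nat^'n)) set \<Rightarrow> (nat \<times> (nat^'n)) set" for S where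
  zero: "(0, 0) \<in> monoid_gen S"
| add: "x \<in> S \<Longrightarrow> y \<in> monoid_gen S \<Longrightarrow> gadd x y \<in> monoid_gen S"

definition linear_growth :: "(nat \<times> (nat^'n)) set \<Rightarrow> bool" where
  "linear_growth G \<longleftrightarrow>
     (\<exists>B :: (nat^'n) set. finite B \<and> G \<subseteq> monoid_gen ((\<lambda>\<beta>. (1, \<beta>)) ` B))"

definition int_emb :: "nat \<times> (nat^'n) \<Rightarrow> int \<times> (int^'n)" where
  "int_emb p = (int (fst p), \<chi> i. int (snd p $ i))"

definition real_emb :: "nat \<times> (nat^'n) \<Rightarrow> real \<times> (real^'n)" where
  "real_emb p = (real (fst p), \<chi> i. real (snd p $ i))"

inductive_set group_gen :: "(int \<times> (int^'n)) set \<Rightarrow> (int \<times> (int^'n)) set" for S where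
  zero: "(0, 0) \<in> group_gen S"
| gen: "x \<in> S \<Longrightarrow> x \<in> group_gen S"
| add: "x \<in> group_gen S \<Longrightarrow> y \<in> group_gen S \<Longrightarrow> (fst x + fst y, snd x + snd y) \<in> group_gen S"
| neg: "x \<in> group_gen S \<Longrightarrow> (- fst x, - snd x) \<in> group_gen S"

definition big :: "(nat \<times> (nat^'n)) set \<Rightarrow> bool" where
  "big G \<longleftrightarrow> group_gen (int_emb ` G) = UNIV"

definition closed_cone :: "(nat \<times> (nat^'n)) set \<Rightarrow> (real \<times> (real^'n)) set" where
  "closed_cone G = closure (convex_cone hull (real_emb ` G))"

definition okounkov_body :: "(nat \<times> (nat^'n)) set \<Rightarrow> (real^'n) set" where
  "okounkov_body G = {x. (1, x) \<in> closed_cone G}"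

end

theory Submission
  imports Defs
begin

text \<open>Since \<open>\<Gamma>\<^sup>k\<^sub>r \<subseteq> \<Gamma>\<^sub>k\<^sub>r\<close>, the cone of \<open>\<Gamma>\<^sup>k\<close> maps into that of \<open>\<Gamma>\<close> under
  \<open>(r, x) \<mapsto> (r, x / k)\<close>, so \<open>\<Delta>(\<Gamma>\<^sup>k) \<subseteq> k \<Delta>(\<Gamma>)\<close> and \<open>k\<^sup>-\<^sup>d vol \<Delta>(\<Gamma>\<^sup>k) \<le> vol \<Delta>(\<Gamma>)\<close>.
  Conversely \<open>\<Delta>(\<Gamma>)\<close> lies in the closed convex hull of the countably many points \<open>\<alpha>/m\<close>,
  \<open>(m, \<alpha>) \<in> \<Gamma>\<close>, so its volume is almost exhausted by a polytope \<open>conv F\<close> with \<open>F\<close> a finite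
  set of such points. Clearing denominators gives \<open>M F \<subseteq> \<Gamma>\<^sub>M\<close>, and bigness makes every
  degree \<open>s \<ge> N\<^sub>0\<close> occur; writing \<open>k = qM + s\<close>, a translate of \<open>qM conv F\<close> lies in
  \<open>conv \<Gamma>\<^sub>k = conv \<Gamma>\<^sup>k\<^sub>1 \<subseteq> \<Delta>(\<Gamma>\<^sup>k)\<close>, whence \<open>k\<^sup>-\<^sup>d vol \<Delta>(\<Gamma>\<^sup>k) \<ge> (1 - N/k)\<^sup>d vol (conv F)\<close>.\<close>

definition real_vec :: "nat^'n \<Rightarrow> real^'n" where
  "real_vec a = (\<chi> i. real (a $ i))"

lemma real_vec_add: "real_vec (a + b) = real_vec a + real_vec b"
  by (simp add: real_vec_def vec_eq_iff)

lemma real_vec_zero [simp]: "real_vec 0 = 0"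
  by (simp add: real_vec_def vec_eq_iff)

lemma real_emb_Pair: "real_emb (m, a) = (real m, real_vec a)"
  by (simp add: real_emb_def real_vec_def)

lemma graded_semigroup_add:
  "graded_semigroup G \<Longrightarrow> (m, a) \<in> G \<Longrightarrow> (n, b) \<in> G \<Longrightarrow> (m + n, a + b) \<in> G"
  unfolding graded_semigroup_def gadd_def by (metis fst_conv snd_conv)

lemma graded_semigroup_multiple:
  assumes "graded_semigroup G" "(m, a) \<in> G"
  shows "\<exists>b. (j * m, b) \<in> G \<and> real_vec b = real j *\<^sub>R real_vec a"
proof (induction j)
  case 0
  then show ?case using assms(1) by (auto simp: graded_semigroup_def)
next
  case (Suc j)
  then obtain b where b: "(j * m, b) \<in> G" "real_vec b = real j *\<^sub>R real_vec a" by blast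
  have "(m + j * m, a + b) \<in> G" using graded_semigroup_add[OF assms b(1)] .
  moreover have "real_vec (a + b) = real (Suc j) *\<^sub>R real_vec a"
    using b(2) by (simp add: real_vec_add algebra_simps)
  ultimately show ?case by (auto simp: algebra_simps)
qed

lemma linear_growth_bound:
  assumes "linear_growth G"
  obtains R :: nat where "\<And>m a i. (m, a) \<in> G \<Longrightarrow> a $ i \<le> R * m"
proof -
  obtain B where B: "finite B" "G \<subseteq> monoid_gen ((\<lambda>\<beta>. (1, \<beta>)) ` B)"
    using assms by (auto simp: linear_growth_def)
  define R where "R = (\<Sum>\<beta>\<in>B. \<Sum>i\<in>UNIV. \<beta> $ i)"
  have R: "\<beta> $ i \<le> R" if "\<beta> \<in> B" for \<beta> i
  proof -
    have "\<beta> $ i \<le> (\<Sum>i\<in>UNIV. \<beta> $ i)" by (rule member_le_sum) auto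
    also have "\<dots> \<le> R" unfolding R_def using B(1) that by (intro member_le_sum) auto
    finally show ?thesis .
  qed
  have "snd x $ i \<le> R * fst x" if "x \<in> monoid_gen ((\<lambda>\<beta>. (1, \<beta>)) ` B)" for x i
    using that
  proof (induction arbitrary: i)
    case zero
    then show ?case by simp
  next
    case (add x y)
    then obtain \<beta> where "\<beta> \<in> B" "x = (1, \<beta>)" by auto
    then show ?case using R[of \<beta> i] add.IH[of i] by (simp add: gadd_def)
  qed
  then show ?thesis using B(2) that by (metis fst_conv snd_conv subsetD)
qed

lemma linear_growth_degree_zero:
  assumes "linear_growth G" "(0, a) \<in> G"
  shows "a = 0"
proof -
  obtain R :: nat where R: "\<And>m a i. (m, a) \<in> G \<Longrightarrow> a $ i \<le> R * m"
    using linear_growth_bound[OF assms(1)] by blast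
  show ?thesis using R[OF assms(2)] by (simp add: vec_eq_iff)
qed

lemma convex_cone_linear_vimage: "linear f \<Longrightarrow> convex_cone S \<Longrightarrow> convex_cone (f -` S)"
  by (simp add: convex_cone_iff linear_0 linear_add linear_cmul)

lemma convex_cone_nonneg_linear: "linear (f :: 'a::real_vector \<Rightarrow> real) \<Longrightarrow> convex_cone {x. 0 \<le> f x}"
  by (simp add: convex_cone_iff linear_0 linear_add linear_cmul)

lemma convex_cone_closed_cone: "convex_cone (closed_cone G)"
proof -
  let ?K = "convex_cone hull (real_emb ` G)"
  have "closure ?K \<noteq> {}" "convex (closure ?K)" "conic (closure ?K)"
    by (simp_all add: convex_cone_hull_nonempty convex_closure convex_convex_cone_hull
        conic_closure conic_convex_cone_hull)
  then show ?thesis unfolding closed_cone_def by (metis convex_cone_def)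
qed

lemma closed_cone_subset:
  assumes "closed C" "convex_cone C" "real_emb ` G \<subseteq> C"
  shows "closed_cone G \<subseteq> C"
  unfolding closed_cone_def using assms by (intro closure_minimal hull_minimal)

lemma real_emb_in_closed_cone: "p \<in> G \<Longrightarrow> real_emb p \<in> closed_cone G"
  unfolding closed_cone_def by (intro closure_subset[THEN subsetD] hull_inc imageI)

lemma closed_okounkov_body: "closed (okounkov_body G)"
proof -
  have "okounkov_body G = (\<lambda>x. (1::real, x)) -` closed_cone G"
    by (auto simp: okounkov_body_def)
  then show ?thesis
    by (auto intro!: continuous_closed_vimage continuous_intros simp: closed_cone_def)
qed

lemma convex_okounkov_body: "convex (okounkov_body G)"
  unfolding convex_def okounkov_body_def
proof (intro allI impI ballI, clarsimp)
  fix x y :: "real^'a" and u v :: real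
  assume a: "(1, x) \<in> closed_cone G" "(1, y) \<in> closed_cone G" "0 \<le> u" "0 \<le> v" "u + v = 1"
  then have "u *\<^sub>R (1::real, x) + v *\<^sub>R (1, y) \<in> closed_cone G"
    using convex_cone_closed_cone unfolding convex_cone_def convex_def by blast
  then show "(1, u *\<^sub>R x + v *\<^sub>R y) \<in> closed_cone G" using a(5) by simp
qed

lemma okounkov_body_subset_box:
  assumes "linear_growth G"
  obtains R :: nat where "okounkov_body G \<subseteq> cbox 0 (\<chi> i. real R)"
proof -
  obtain R :: nat where R: "\<And>m a i. (m, a) \<in> G \<Longrightarrow> a $ i \<le> R * m"
    using linear_growth_bound[OF assms] by blast
  define f :: "'a \<times> bool \<Rightarrow> real \<times> (real^'a) \<Rightarrow> real" where
    "f c p = (if snd c then snd p $ fst c else real R * fst p - snd p $ fst c)" for c p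
  define Q where "Q = (\<Inter>c. {p. 0 \<le> f c p})"
  have "linear (f c)" for c
    by (cases "snd c") (auto intro!: linearI simp: f_def algebra_simps)
  then have "convex_cone Q" unfolding Q_def
    by (intro convex_cone_Inter) (auto intro: convex_cone_nonneg_linear)
  moreover have "closed {p. 0 \<le> f c p}" for c
    by (cases "snd c") (auto simp: f_def intro!: closed_Collect_le continuous_intros)
  then have "closed Q" unfolding Q_def by blast
  moreover have "real_emb p \<in> Q" if "p \<in> G" for p
  proof -
    obtain m a where p: "p = (m, a)" by fastforce
    have "real (a $ i) \<le> real R * real m" for i
      using R[of m a i] that p by (simp flip: of_nat_mult)
    then show ?thesis by (simp add: Q_def f_def p real_emb_def)
  qed
  ultimately have cone: "closed_cone G \<subseteq> Q" by (intro closed_cone_subset) auto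
  have "0 \<le> x $ i \<and> x $ i \<le> real R" if "x \<in> okounkov_body G" for x i
  proof -
    have "(1, x) \<in> Q" using cone that by (auto simp: okounkov_body_def)
    then have "0 \<le> f (i, True) (1, x)" "0 \<le> f (i, False) (1, x)" unfolding Q_def by blast+
    then show ?thesis by (simp add: f_def)
  qed
  then have "okounkov_body G \<subseteq> cbox 0 (\<chi> i. real R)" by (auto simp: mem_box_cart)
  then show ?thesis using that by blast
qed

lemma compact_okounkov_body: "linear_growth G \<Longrightarrow> compact (okounkov_body G)"
  by (metis okounkov_body_subset_box bounded_cbox bounded_subset closed_okounkov_body
        compact_eq_bounded_closed)

lemma okounkov_body_subset_scaled:
  assumes k: "k \<ge> (1::nat)" and slices: "\<And>r. slice H r \<subseteq> slice G (k * r)"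
  shows "okounkov_body H \<subseteq> (\<lambda>x. real k *\<^sub>R x) ` okounkov_body G"
proof -
  define f where "f p = (fst p, (1 / real k) *\<^sub>R snd p)" for p :: "real \<times> (real^'a)"
  have "linear f" unfolding f_def by (intro linearI) (auto simp: algebra_simps)
  then have "convex_cone (f -` closed_cone G)"
    using convex_cone_closed_cone by (rule convex_cone_linear_vimage)
  moreover have "closed (f -` closed_cone G)" unfolding closed_cone_def f_def
    by (intro continuous_closed_vimage) (auto intro!: continuous_intros)
  moreover have "real_emb ` H \<subseteq> f -` closed_cone G"
  proof
    fix p assume "p \<in> real_emb ` H"
    then obtain r a where ra: "(r, a) \<in> H" "p = real_emb (r, a)" by auto
    then have "real_emb (k * r, a) \<in> closed_cone G"
      using slices[of r] by (auto simp: slice_def intro: real_emb_in_closed_cone)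
    then have "(1 / real k) *\<^sub>R real_emb (k * r, a) \<in> closed_cone G"
      by (intro convex_cone_scaleR[OF convex_cone_closed_cone]) auto
    then show "p \<in> f -` closed_cone G"
      using k ra(2) by (simp add: f_def real_emb_Pair)
  qed
  ultimately have cone: "closed_cone H \<subseteq> f -` closed_cone G" by (intro closed_cone_subset)
  show ?thesis
  proof
    fix x assume "x \<in> okounkov_body H"
    then have "(1 / real k) *\<^sub>R x \<in> okounkov_body G"
      using cone by (auto simp: okounkov_body_def f_def)
    moreover have "x = real k *\<^sub>R ((1 / real k) *\<^sub>R x)" using k by simp
    ultimately show "x \<in> (\<lambda>x. real k *\<^sub>R x) ` okounkov_body G" by blast
  qed
qed

lemma
  fixes G :: "(nat \<times> (nat^'n)) set"
  assumes "linear_growth G" "k \<ge> 1" "\<And>r. slice H r \<subseteq> slice G (k * r)"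
  shows compact_okounkov_body_subsemigroup: "compact (okounkov_body H)"
    and measure_okounkov_body_subsemigroup_le:
      "measure lebesgue (okounkov_body H) \<le> real k ^ CARD('n) * measure lebesgue (okounkov_body G)"
proof -
  let ?kG = "(\<lambda>x. real k *\<^sub>R x + 0) ` okounkov_body G"
  have sub: "okounkov_body H \<subseteq> ?kG"
    using okounkov_body_subset_scaled[OF assms(2,3)] by simp
  have cpt: "compact ?kG"
    using compact_okounkov_body[OF assms(1)] by (simp add: compact_scaling)
  then show cH: "compact (okounkov_body H)"
    using sub closed_okounkov_body bounded_subset compact_eq_bounded_closed by blast
  have "measure lebesgue (okounkov_body H) \<le> measure lebesgue ?kG"
    using sub lmeasurable_compact[OF cH] lmeasurable_compact[OF cpt]
    by (intro measure_mono_fmeasurable) auto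
  also have "\<dots> = real k ^ CARD('n) * measure lebesgue (okounkov_body G)"
    using measure_lebesgue_affine[of "real k" 0 "okounkov_body G"] by simp
  finally show "measure lebesgue (okounkov_body H) \<le> real k ^ CARD('n) * measure lebesgue (okounkov_body G)" .
qed

lemma convex_hull_slice_one_subset_okounkov_body:
  "convex hull (real_vec ` slice H 1) \<subseteq> okounkov_body H"
proof (intro hull_minimal convex_okounkov_body subsetI, clarify)
  fix a assume "a \<in> slice H 1"
  then have "real_emb (1, a) \<in> closed_cone H" by (intro real_emb_in_closed_cone) (simp add: slice_def)
  then show "real_vec a \<in> okounkov_body H" by (simp add: okounkov_body_def real_emb_Pair)
qed

definition normalized_points :: "(nat \<times> (nat^'n)) set \<Rightarrow> (real^'n) set" where
  "normalized_points G = {(1 / real m) *\<^sub>R real_vec a | m a. (m, a) \<in> G \<and> m \<ge> 1}"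

lemma countable_normalized_points: "countable (normalized_points G)"
proof -
  have "normalized_points G \<subseteq> (\<lambda>(m, a). (1 / real m) *\<^sub>R real_vec a) ` UNIV"
    by (auto simp: normalized_points_def)
  then show ?thesis by (rule countable_subset) simp
qed

lemma normalized_points_subset_okounkov_body: "normalized_points G \<subseteq> okounkov_body G"
proof
  fix x assume "x \<in> normalized_points G"
  then obtain m a where ma: "(m, a) \<in> G" "m \<ge> 1" "x = (1 / real m) *\<^sub>R real_vec a"
    unfolding normalized_points_def by blast
  have "(1 / real m) *\<^sub>R real_emb (m, a) \<in> closed_cone G"
    using ma(1) by (intro convex_cone_scaleR[OF convex_cone_closed_cone] real_emb_in_closed_cone) auto
  then show "x \<in> okounkov_body G" using ma(2,3) by (simp add: okounkov_body_def real_emb_Pair)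
qed

text \<open>The weight of a generator at height \<open>m \<ge> 1\<close> is rescaled by \<open>m / t\<close>; by linear growth,
  generators at height 0 are 0 and contribute nothing.\<close>
lemma convex_hull_normalized_points:
  assumes lg: "linear_growth G" and in_hull: "(t, y) \<in> convex hull (real_emb ` G)" and t: "t > 0"
  shows "(1 / t) *\<^sub>R y \<in> convex hull (normalized_points G)"
proof -
  obtain T u where T: "finite T" "T \<subseteq> real_emb ` G" "\<forall>x\<in>T. 0 \<le> u x" "sum u T = 1"
    "(\<Sum>v\<in>T. u v *\<^sub>R v) = (t, y)"
    using in_hull unfolding convex_hull_explicit by blast
  have t_sum: "t = (\<Sum>v\<in>T. u v * fst v)"
    using arg_cong[OF T(5), of fst] by (simp add: fst_sum)
  have y_sum: "y = (\<Sum>v\<in>T. u v *\<^sub>R snd v)"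
    using arg_cong[OF T(5), of snd] by (simp add: snd_sum)
  have height_zero: "snd v = 0" if "v \<in> T" "fst v = 0" for v
    using that T(2) linear_growth_degree_zero[OF lg] by (force simp: real_emb_Pair)
  have normalized: "0 < fst v \<and> (1 / fst v) *\<^sub>R snd v \<in> normalized_points G"
    if "v \<in> T" "fst v \<noteq> 0" for v
    using that T(2) by (force simp: real_emb_Pair normalized_points_def)
  define T' where "T' = {v\<in>T. fst v \<noteq> 0}"
  have T': "T' \<subseteq> T" "finite T'" using T(1) by (auto simp: T'_def)
  define w where "w v = u v * fst v / t" for v
  have "(\<Sum>v\<in>T'. w v) = (\<Sum>v\<in>T. w v)"
    by (rule sum.mono_neutral_left[OF T(1) T'(1)]) (auto simp: T'_def w_def)
  also have "\<dots> = 1" using t_sum t by (simp add: w_def flip: sum_divide_distrib)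
  finally have "(\<Sum>v\<in>T'. w v) = 1" .
  moreover have "0 \<le> w v" if "v \<in> T'" for v
  proof -
    have "0 \<le> u v" "0 < fst v" using that T(3) normalized by (auto simp: T'_def)
    then show ?thesis using t by (simp add: w_def)
  qed
  ultimately have "(\<Sum>v\<in>T'. w v *\<^sub>R ((1 / fst v) *\<^sub>R snd v)) \<in> convex hull (normalized_points G)"
    using normalized by (intro convex_sum[OF T'(2) convex_convex_hull]) (auto simp: T'_def intro: hull_inc)
  moreover have "(\<Sum>v\<in>T'. w v *\<^sub>R ((1 / fst v) *\<^sub>R snd v)) = (\<Sum>v\<in>T. (1 / t) *\<^sub>R (u v *\<^sub>R snd v))"
    using height_zero by (intro sum.mono_neutral_cong_left[OF T(1) T'(1)]) (auto simp: T'_def w_def)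
  ultimately show ?thesis by (simp add: y_sum scaleR_sum_right)
qed

lemma okounkov_body_subset_closure_hull:
  assumes lg: "linear_growth G"
  shows "okounkov_body G \<subseteq> closure (convex hull (normalized_points G))"
proof
  fix x assume "x \<in> okounkov_body G"
  then obtain p where p: "\<And>n. p n \<in> convex_cone hull (real_emb ` G)" "p \<longlonglongrightarrow> (1, x)"
    unfolding okounkov_body_def closed_cone_def closure_sequential by blast
  define y where "y n = (1 / fst (p n)) *\<^sub>R snd (p n)" for n
  have fst_lim: "(\<lambda>n. fst (p n)) \<longlonglongrightarrow> 1" using tendsto_fst[OF p(2)] by simp
  have "y \<longlonglongrightarrow> (1 / 1) *\<^sub>R x"
    unfolding y_def using tendsto_snd[OF p(2)] by (intro tendsto_intros fst_lim) simp_all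
  then have lim: "y \<longlonglongrightarrow> x" by simp
  have "eventually (\<lambda>n. fst (p n) > 0) sequentially"
    using order_tendstoD(1)[OF fst_lim, of 0] by simp
  then have "eventually (\<lambda>n. y n \<in> convex hull (normalized_points G)) sequentially"
  proof eventually_elim
    case (elim n)
    then have "p n \<noteq> 0" by auto
    then obtain c t z where "(t, z) \<in> convex hull (real_emb ` G)" "c \<ge> 0" "p n = c *\<^sub>R (t, z)"
      using p(1)[of n] by (auto simp: convex_cone_hull_convex_hull)
    with elim show ?case
      using convex_hull_normalized_points[OF lg] by (auto simp: y_def zero_less_mult_iff)
  qed
  then have "eventually (\<lambda>n. y n \<in> closure (convex hull (normalized_points G))) sequentially"
    by (rule eventually_mono) (use closure_subset in blast)
  then show "x \<in> closure (convex hull (normalized_points G))"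
    using Lim_in_closed_set[OF closed_closure _ trivial_limit_sequentially lim] by blast
qed

lemma measure_closure_convex:
  fixes S :: "'a::euclidean_space set"
  assumes "convex S" "bounded S"
  shows "measure lebesgue (closure S) = measure lebesgue S"
proof -
  have "frontier S \<in> null_sets lebesgue"
    using negligible_convex_frontier[OF assms(1)] negligible_iff_null_sets by blast
  then show ?thesis
    unfolding closure_Un_frontier using measurable_convex[OF assms] by (intro measure_Un_null_set) auto
qed

text \<open>Continuity of measure along the increasing hulls of the first \<open>n\<close> points of an
  enumeration of \<open>S\<close>.\<close>
lemma measure_convex_hull_approx_finite:
  fixes S :: "'a::euclidean_space set"
  assumes "countable S" "bounded S" "e > 0"
  obtains F where "finite F" "F \<subseteq> S" "measure lebesgue (convex hull S) - e < measure lebesgue (convex hull F)"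
proof (cases "S = {}")
  case True
  then show ?thesis using that[of "{}"] assms(3) by simp
next
  case False
  define A where "A n = convex hull (from_nat_into S ` {..n})" for n
  have range: "range (from_nat_into S) = S" using False assms(1) by simp
  have A_measurable: "range A \<subseteq> sets lebesgue"
    unfolding A_def by (auto intro!: fmeasurableD lmeasurable_compact compact_convex_hull
        simp: finite_imp_compact)
  have "incseq A" unfolding A_def incseq_def by (intro allI impI hull_mono image_mono) auto
  have union: "(\<Union>n. A n) = convex hull S"
  proof
    show "(\<Union>n. A n) \<subseteq> convex hull S" unfolding A_def using range by (intro UN_least hull_mono) auto
  next
    show "convex hull S \<subseteq> (\<Union>n. A n)"
    proof
      fix y assume "y \<in> convex hull S"
      then obtain T u where T: "finite T" "T \<subseteq> S" "\<forall>x\<in>T. 0 \<le> u x" "sum u T = 1"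
          "(\<Sum>v\<in>T. u v *\<^sub>R v) = y"
        unfolding convex_hull_explicit by blast
      have y: "y \<in> convex hull T"
        unfolding T(5)[symmetric] using T(3)
        by (intro convex_sum[OF T(1) convex_convex_hull T(4)]) (auto intro: hull_inc)
      obtain C where C: "finite C" "T = from_nat_into S ` C"
        using finite_subset_image[OF T(1), of "from_nat_into S" UNIV] T(2) range by blast
      obtain n where "C \<subseteq> {..n}" using C(1) finite_nat_iff_bounded_le by blast
      then have "convex hull T \<subseteq> A n" unfolding A_def C(2) by (intro hull_mono image_mono)
      then show "y \<in> (\<Union>n. A n)" using y by blast
    qed
  qed
  have "convex hull S \<in> lmeasurable"
    by (rule measurable_convex) (simp_all add: assms(2) bounded_convex_hull)
  then have "emeasure lebesgue (\<Union>n. A n) \<noteq> \<infinity>"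
    unfolding union infinity_ennreal_def by (rule fmeasurableD2)
  from Lim_measure_incseq[OF A_measurable \<open>incseq A\<close> this]
  have "(\<lambda>n. measure lebesgue (A n)) \<longlonglongrightarrow> measure lebesgue (convex hull S)"
    unfolding union .
  then have "eventually (\<lambda>n. measure lebesgue (convex hull S) - e < measure lebesgue (A n)) sequentially"
    by (rule order_tendstoD(1)) (use assms(3) in linarith)
  then obtain n where "measure lebesgue (convex hull S) - e < measure lebesgue (A n)"
    unfolding eventually_sequentially by blast
  then show ?thesis
    using range by (intro that[of "from_nat_into S ` {..n}"]) (auto simp: A_def)
qed

lemma okounkov_body_approx_finite:
  assumes "linear_growth G" "e > 0"
  obtains F where "finite F" "F \<subseteq> normalized_points G"
    "measure lebesgue (okounkov_body G) - e < measure lebesgue (convex hull F)"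
proof -
  let ?C = "convex hull (normalized_points G)"
  have bounded: "bounded (normalized_points G)"
    using compact_okounkov_body[OF assms(1)] normalized_points_subset_okounkov_body
    by (meson bounded_subset compact_imp_bounded)
  then have "compact (closure ?C)" by (simp add: compact_closure bounded_convex_hull)
  then have "measure lebesgue (okounkov_body G) \<le> measure lebesgue (closure ?C)"
    using okounkov_body_subset_closure_hull[OF assms(1)] compact_okounkov_body[OF assms(1)]
    by (intro measure_mono_fmeasurable fmeasurableD lmeasurable_compact)
  also have "\<dots> = measure lebesgue ?C"
    using bounded by (intro measure_closure_convex) (auto simp: bounded_convex_hull)
  finally have le: "measure lebesgue (okounkov_body G) \<le> measure lebesgue ?C" .
  obtain F where "finite F" "F \<subseteq> normalized_points G" "measure lebesgue ?C - e < measure lebesgue (convex hull F)"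
    using measure_convex_hull_approx_finite[OF countable_normalized_points bounded assms(2)] .
  with le show ?thesis using that by simp
qed

lemma submonoid_nat_consecutive:
  fixes D :: "nat set"
  assumes zero: "0 \<in> D" and add: "\<And>x y. x \<in> D \<Longrightarrow> y \<in> D \<Longrightarrow> x + y \<in> D"
    and b: "b \<in> D" "Suc b \<in> D" and s: "s \<ge> b * b"
  shows "s \<in> D"
proof -
  have mult: "n * x \<in> D" if "x \<in> D" for n x
    using that by (induction n) (auto intro: zero add)
  show ?thesis
  proof (cases "b = 0")
    case True
    then show ?thesis using mult[OF b(2), of s] by simp
  next
    case False
    define q r where "q = s div b" and "r = s mod b"
    have "b \<le> q" using div_le_mono[OF s, of b] False by (simp add: q_def)
    moreover have "r < b" "s = q * b + r" using False by (simp_all add: q_def r_def)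
    ultimately have "s = (q - r) * b + r * Suc b"
      by (simp add: algebra_simps diff_mult_distrib)
    then show ?thesis using add[OF mult[OF b(1), of "q - r"] mult[OF b(2), of r]] by simp
  qed
qed

definition degrees :: "(nat \<times> (nat^'n)) set \<Rightarrow> nat set" where
  "degrees G = {m. slice G m \<noteq> {}}"

lemma zero_in_degrees: "graded_semigroup G \<Longrightarrow> 0 \<in> degrees G"
  by (auto simp: degrees_def slice_def graded_semigroup_def)

lemma degrees_add:
  "graded_semigroup G \<Longrightarrow> x \<in> degrees G \<Longrightarrow> y \<in> degrees G \<Longrightarrow> x + y \<in> degrees G"
  using graded_semigroup_add by (fastforce simp: degrees_def slice_def)

text \<open>The degree map \<open>\<int> \<times> \<int>\<^sup>d \<rightarrow> \<int>\<close> sends the group generated by \<open>G\<close> onto the group of differences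
  of degrees; bigness makes \<open>1\<close> such a difference.\<close>
lemma big_consecutive_degrees:
  assumes gs: "graded_semigroup G" and "big G"
  obtains b where "b \<in> degrees G" "Suc b \<in> degrees G"
proof -
  have "\<exists>a\<in>degrees G. \<exists>b\<in>degrees G. fst x = int a - int b"
    if "x \<in> group_gen (int_emb ` G)" for x
    using that
  proof induction
    case zero
    then show ?case using zero_in_degrees[OF gs] by force
  next
    case (gen x)
    then show ?case using zero_in_degrees[OF gs] by (force simp: int_emb_def degrees_def slice_def)
  next
    case (add x y)
    then obtain a b a' b' where "a \<in> degrees G" "b \<in> degrees G" "a' \<in> degrees G" "b' \<in> degrees G"
      "fst x = int a - int b" "fst y = int a' - int b'" by blast
    then show ?case using degrees_add[OF gs] by (intro bexI[of _ "a + a'"] bexI[of _ "b + b'"]) auto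
  next
    case (neg x)
    then obtain a b where "a \<in> degrees G" "b \<in> degrees G" "fst x = int a - int b" by blast
    then show ?case by (intro bexI[of _ b] bexI[of _ a]) auto
  qed
  moreover have "(1, 0) \<in> group_gen (int_emb ` G)" using assms(2) by (simp add: big_def)
  ultimately obtain a b where "a \<in> degrees G" "b \<in> degrees G" "(1::int) = int a - int b" by force
  moreover from this have "a = Suc b" by linarith
  ultimately show ?thesis using that by blast
qed

lemma big_large_degrees:
  assumes "graded_semigroup G" "big G"
  obtains N where "\<And>s. s \<ge> N \<Longrightarrow> \<exists>a. (s, a) \<in> G"
proof -
  obtain b where b: "b \<in> degrees G" "Suc b \<in> degrees G"
    using big_consecutive_degrees[OF assms] .
  have "s \<in> degrees G" if "s \<ge> b * b" for s
    using zero_in_degrees[OF assms(1)] degrees_add[OF assms(1)] b that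
    by (rule submonoid_nat_consecutive)
  then show ?thesis by (intro that[of "b * b"]) (auto simp: degrees_def slice_def)
qed

lemma normalized_points_common_multiple:
  assumes gs: "graded_semigroup G" and F: "finite F" "F \<subseteq> normalized_points G"
  obtains M where "M \<ge> 1" "\<And>p. p \<in> F \<Longrightarrow> real M *\<^sub>R p \<in> real_vec ` slice G M"
proof -
  have "\<exists>m a. (m, a) \<in> G \<and> m \<ge> 1 \<and> real m *\<^sub>R p = real_vec a" if p: "p \<in> F" for p
  proof -
    obtain m a where "(m, a) \<in> G" "m \<ge> 1" "p = (1 / real m) *\<^sub>R real_vec a"
      using p F(2) by (auto simp: normalized_points_def)
    then show ?thesis by (intro exI[of _ m] exI[of _ a]) simp
  qed
  then obtain m a where ma: "\<And>p. p \<in> F \<Longrightarrow> (m p, a p) \<in> G \<and> m p \<ge> 1 \<and> real (m p) *\<^sub>R p = real_vec (a p)"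
    by metis
  define M where "M = (\<Prod>p\<in>F. m p)"
  have "M \<ge> 1" unfolding M_def using ma by (intro prod_ge_1) auto
  moreover have "real M *\<^sub>R p \<in> real_vec ` slice G M" if p: "p \<in> F" for p
  proof -
    obtain j where j: "M = j * m p"
      using dvd_prod_eqI[OF F(1) p refl, of m] unfolding M_def by (metis dvd_def mult.commute)
    obtain b where b: "(M, b) \<in> G" "real_vec b = real j *\<^sub>R real_vec (a p)"
      using graded_semigroup_multiple[OF gs, of "m p" "a p" j] ma[OF p] j by auto
    have "real M *\<^sub>R p = real_vec b" using b(2) ma[OF p] j by (simp flip: scaleR_scaleR)
    then show ?thesis using b(1) by (intro image_eqI[where x = b]) (simp_all add: slice_def)
  qed
  ultimately show ?thesis using that by blast
qed

lemma translate_scaled_subset_slice: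
  assumes gs: "graded_semigroup G"
    and M: "\<And>p. p \<in> F \<Longrightarrow> real M *\<^sub>R p \<in> real_vec ` slice G M" and \<gamma>: "(s, \<gamma>) \<in> G"
  shows "(\<lambda>x. real (q * M) *\<^sub>R x + real_vec \<gamma>) ` F \<subseteq> real_vec ` slice G (q * M + s)"
proof clarify
  fix p assume "p \<in> F"
  then obtain \<beta> where \<beta>: "(M, \<beta>) \<in> G" "real_vec \<beta> = real M *\<^sub>R p"
    using M unfolding slice_def by (metis (mono_tags, lifting) imageE mem_Collect_eq)
  obtain \<delta> where "(q * M, \<delta>) \<in> G" "real_vec \<delta> = real q *\<^sub>R real_vec \<beta>"
    using graded_semigroup_multiple[OF gs \<beta>(1)] by blast
  then show "real (q * M) *\<^sub>R p + real_vec \<gamma> \<in> real_vec ` slice G (q * M + s)"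
    using graded_semigroup_add[OF gs _ \<gamma>] \<beta>(2)
    by (intro image_eqI[of _ _ "\<delta> + \<gamma>"]) (auto simp: slice_def real_vec_add)
qed

lemma measure_okounkov_body_lower_bound:
  fixes G :: "(nat \<times> (nat^'n)) set"
  assumes gs: "graded_semigroup G" and "big G" and F: "finite F" "F \<subseteq> normalized_points G"
  obtains N where "\<And>k H. k \<ge> N \<Longrightarrow> slice H 1 = slice G k \<Longrightarrow> compact (okounkov_body H) \<Longrightarrow>
    (real k - real N) ^ CARD('n) * measure lebesgue (convex hull F) \<le> measure lebesgue (okounkov_body H)"
proof -
  obtain M where M: "M \<ge> 1" "\<And>p. p \<in> F \<Longrightarrow> real M *\<^sub>R p \<in> real_vec ` slice G M"
    using normalized_points_common_multiple[OF gs F] by blast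
  obtain N\<^sub>0 where N\<^sub>0: "\<And>s. s \<ge> N\<^sub>0 \<Longrightarrow> \<exists>a. (s, a) \<in> G"
    using big_large_degrees[OF gs assms(2)] by blast
  have "(real k - real (N\<^sub>0 + M)) ^ CARD('n) * measure lebesgue (convex hull F)
          \<le> measure lebesgue (okounkov_body H)"
    if k: "k \<ge> N\<^sub>0 + M" and H: "slice H 1 = slice G k" "compact (okounkov_body H)" for k H
  proof -
    define q s where "q = (k - N\<^sub>0) div M" and "s = N\<^sub>0 + (k - N\<^sub>0) mod M"
    have k_eq: "k = q * M + s" using k by (simp add: q_def s_def)
    have "s < N\<^sub>0 + M" using M(1) by (simp add: s_def)
    then have qM: "real k - real (N\<^sub>0 + M) \<le> real (q * M)" using k_eq by simp
    obtain \<gamma> where \<gamma>: "(s, \<gamma>) \<in> G" using N\<^sub>0[of s] by (auto simp: s_def)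
    let ?T = "\<lambda>x. real (q * M) *\<^sub>R x + real_vec \<gamma>"
    have "?T ` (convex hull F) = convex hull (?T ` F)"
      using convex_hull_affinity[of "real_vec \<gamma>" "real (q * M)" F] by (simp add: add.commute)
    also have "\<dots> \<subseteq> convex hull (real_vec ` slice H 1)"
      unfolding H(1) k_eq by (intro hull_mono translate_scaled_subset_slice[OF gs M(2) \<gamma>])
    also have "\<dots> \<subseteq> okounkov_body H" by (rule convex_hull_slice_one_subset_okounkov_body)
    finally have sub: "?T ` (convex hull F) \<subseteq> okounkov_body H" .
    have "(real k - real (N\<^sub>0 + M)) ^ CARD('n) \<le> real (q * M) ^ CARD('n)"
      using k qM by (intro power_mono) auto
    then have "(real k - real (N\<^sub>0 + M)) ^ CARD('n) * measure lebesgue (convex hull F)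
        \<le> real (q * M) ^ CARD('n) * measure lebesgue (convex hull F)"
      by (rule mult_right_mono) simp
    also have "\<dots> = measure lebesgue (?T ` (convex hull F))"
      using measure_lebesgue_affine[of "real (q * M)" "real_vec \<gamma>" "convex hull F"] by simp
    also have "\<dots> \<le> measure lebesgue (okounkov_body H)"
    proof (rule measure_mono_fmeasurable[OF sub _ lmeasurable_compact[OF H(2)]])
      show "?T ` (convex hull F) \<in> sets lebesgue"
        using F(1) by (intro fmeasurableD lmeasurable_compact compact_continuous_image
            compact_convex_hull continuous_intros) (simp add: finite_imp_compact)
    qed
    finally show ?thesis .
  qed
  then show ?thesis using that by blast
qed

lemma measure_lborel_closed:
  fixes S :: "'a::euclidean_space set"
  shows "closed S \<Longrightarrow> measure lborel S = measure lebesgue S"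
  by (simp add: borel_closed)

lemma eventually_measure_okounkov_body_gt:
  fixes \<Gamma> :: "(nat \<times> (nat^'n)) set" and \<Gamma>s :: "nat \<Rightarrow> (nat \<times> (nat^'n)) set"
  assumes gs: "graded_semigroup \<Gamma>" and lg: "linear_growth \<Gamma>" and bg: "big \<Gamma>"
    and slice_one: "\<And>k. k \<ge> 1 \<Longrightarrow> slice (\<Gamma>s k) 1 = slice \<Gamma> k"
    and slices: "\<And>k r. k \<ge> 1 \<Longrightarrow> slice (\<Gamma>s k) r \<subseteq> slice \<Gamma> (k * r)"
    and e: "e > 0"
  shows "eventually (\<lambda>k. measure lebesgue (okounkov_body \<Gamma>) - e
           < measure lebesgue (okounkov_body (\<Gamma>s k)) / real k ^ CARD('n)) sequentially"
proof -
  obtain F where F: "finite F" "F \<subseteq> normalized_points \<Gamma>"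
    and V: "measure lebesgue (okounkov_body \<Gamma>) - e / 2 < measure lebesgue (convex hull F)"
    using okounkov_body_approx_finite[OF lg, of "e / 2"] e by auto
  obtain N where N: "\<And>k H. k \<ge> N \<Longrightarrow> slice H 1 = slice \<Gamma> k \<Longrightarrow> compact (okounkov_body H) \<Longrightarrow>
      (real k - real N) ^ CARD('n) * measure lebesgue (convex hull F) \<le> measure lebesgue (okounkov_body H)"
    using measure_okounkov_body_lower_bound[OF gs bg F] by blast
  let ?V = "measure lebesgue (convex hull F)"
  have "(\<lambda>k. (1 - real N / real k) ^ CARD('n) * ?V) \<longlonglongrightarrow> (1 - 0) ^ CARD('n) * ?V"
    by (intro tendsto_intros)
  then have "eventually (\<lambda>k. ?V - e / 2 < (1 - real N / real k) ^ CARD('n) * ?V) sequentially"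
    using e by (intro order_tendstoD(1)) auto
  moreover have "eventually (\<lambda>k. (1 - real N / real k) ^ CARD('n) * ?V
      \<le> measure lebesgue (okounkov_body (\<Gamma>s k)) / real k ^ CARD('n)) sequentially"
  proof (rule eventually_sequentiallyI[of "max N 1"])
    fix k assume k: "max N 1 \<le> k"
    have "(1 - real N / real k) ^ CARD('n) * ?V = (real k - real N) ^ CARD('n) * ?V / real k ^ CARD('n)"
    proof -
      have "1 - real N / real k = (real k - real N) / real k" using k by (simp add: field_simps)
      then show ?thesis by (simp add: power_divide)
    qed
    also have "\<dots> \<le> measure lebesgue (okounkov_body (\<Gamma>s k)) / real k ^ CARD('n)"
      using k slice_one[of k] compact_okounkov_body_subsemigroup[OF lg _ slices, of k]
      by (intro divide_right_mono N) auto
    finally show "(1 - real N / real k) ^ CARD('n) * ?V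
      \<le> measure lebesgue (okounkov_body (\<Gamma>s k)) / real k ^ CARD('n)" .
  qed
  ultimately show ?thesis by eventually_elim (use V in linarith)
qed

theorem lemma4p2:
  fixes \<Gamma> :: "(nat \<times> (nat^'n)) set"
    and \<Gamma>s :: "nat \<Rightarrow> (nat \<times> (nat^'n)) set"
  assumes "graded_semigroup \<Gamma>"
    and "linear_growth \<Gamma>"
    and "big \<Gamma>"
    and "\<And>k. k \<ge> 1 \<Longrightarrow> graded_semigroup (\<Gamma>s k)"
    and "\<And>k. k \<ge> 1 \<Longrightarrow> slice (\<Gamma>s k) 1 = slice \<Gamma> k"
    and "\<And>k r. k \<ge> 1 \<Longrightarrow> slice (\<Gamma>s k) r \<subseteq> slice \<Gamma> (k * r)"
  shows "(\<lambda>k. measure lborel (okounkov_body (\<Gamma>s k)) / real k ^ CARD('n))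
           \<longlonglongrightarrow> measure lborel (okounkov_body \<Gamma>)"
  unfolding measure_lborel_closed[OF closed_okounkov_body]
proof (rule tendstoI)
  fix e :: real assume "e > 0"
  let ?L = "measure lebesgue (okounkov_body \<Gamma>)"
  let ?f = "\<lambda>k. measure lebesgue (okounkov_body (\<Gamma>s k)) / real k ^ CARD('n)"
  have "eventually (\<lambda>k. ?f k \<le> ?L) sequentially"
  proof (rule eventually_sequentiallyI[of 1])
    fix k :: nat assume "k \<ge> 1"
    then show "?f k \<le> ?L"
      using measure_okounkov_body_subsemigroup_le[OF assms(2) _ assms(6)]
      by (simp add: divide_le_eq mult.commute)
  qed
  moreover have "eventually (\<lambda>k. ?L - e < ?f k) sequentially"
    using eventually_measure_okounkov_body_gt[OF assms(1-3,5,6) \<open>e > 0\<close>] .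
  ultimately show "eventually (\<lambda>k. dist (?f k) ?L < e) sequentially"
    by eventually_elim (simp add: dist_real_def abs_if)
qed

end
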